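(* Let $\Gamma$ be a finite tetravalent $G$-half-arc-transitive graph (for some $G\le\mathrm{Aut}(\Gamma)$) with $\mathrm{att}_G(\Gamma)$ even. Then for each vertex $v$ of $\Gamma$ and the two $G$-alternating cycles $C$ and $C'$ containing $v$, the antipodal vertex of $v$ on $C$ coincides with the antipodal vertex of $v$ on $C'$. Moreover, the involution $\tau$ of $V(\Gamma)$ interchanging each pair of antipodal vertices on all $G$-alternating cycles of $\Gamma$ is an automorphism of $\Gamma$ centralising $G$.
   Context: All graphs are finite and simple. For a tetravalent graph $\Gamma$ and $G\le \mathrm{Aut}(\Gamma)$, $\Gamma$ is $G$-half-arc-transitive if $G$ acts transitively on vertices and edges but not on arcs; then the $G$-orbits on arcs give two paired orientations of the edges, and each vertex is the tail of two and head of two incident edges. A $G$-alternating cycle is a cycle in which every two consecutive edges have a common head or a common tail; each vertex lies on exactly two $G$-alternating cycles. All $G$-alternating cycles have the same length $2\,\mathrm{rad}_G(\Gamma)$, and any two sharing a vertex meet in the same number $\mathrm{att}_G(\Gamma)$ of vertices. The antipodal vertex of $v_i$ on a cycle $(v_0,\dots,v_{2r-1})$ is $v_{i+r}$ (indices mod $2r$). *)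

theory Defs
  imports Main
begin

definition simple_graph :: "'a set \<Rightarrow> ('a \<Rightarrow> 'a \<Rightarrow> bool) \<Rightarrow> bool" where
  "simple_graph V E \<longleftrightarrow> finite V \<and> (\<forall>x y. E x y \<longrightarrow> x \<in> V \<and> y \<in> V)
     \<and> (\<forall>x y. E x y \<longrightarrow> E y x) \<and> (\<forall>x. \<not> E x x)"

definition tetravalent :: "'a set \<Rightarrow> ('a \<Rightarrow> 'a \<Rightarrow> bool) \<Rightarrow> bool" where
  "tetravalent V E \<longleftrightarrow> (\<forall>x\<in>V. card {y. E x y} = 4)"

definition graph_aut :: "'a set \<Rightarrow> ('a \<Rightarrow> 'a \<Rightarrow> bool) \<Rightarrow> ('a \<Rightarrow> 'a) \<Rightarrow> bool" where
  "graph_aut V E f \<longleftrightarrow> bij_betw f V V \<and> (\<forall>x. x \<notin> V \<longrightarrow> f x = x)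
     \<and> (\<forall>x\<in>V. \<forall>y\<in>V. E x y \<longleftrightarrow> E (f x) (f y))"

definition aut_subgroup :: "'a set \<Rightarrow> ('a \<Rightarrow> 'a \<Rightarrow> bool) \<Rightarrow> ('a \<Rightarrow> 'a) set \<Rightarrow> bool" where
  "aut_subgroup V E G \<longleftrightarrow> (\<forall>f\<in>G. graph_aut V E f) \<and> id \<in> G
     \<and> (\<forall>f\<in>G. \<forall>g\<in>G. f \<circ> g \<in> G) \<and> (\<forall>f\<in>G. inv f \<in> G)"

definition half_arc_transitive :: "'a set \<Rightarrow> ('a \<Rightarrow> 'a \<Rightarrow> bool) \<Rightarrow> ('a \<Rightarrow> 'a) set \<Rightarrow> bool" where
  "half_arc_transitive V E G \<longleftrightarrow>
     (\<forall>x\<in>V. \<forall>y\<in>V. \<exists>g\<in>G. g x = y)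
   \<and> (\<forall>x y u w. E x y \<longrightarrow> E u w \<longrightarrow> (\<exists>g\<in>G. (g x = u \<and> g y = w) \<or> (g x = w \<and> g y = u)))
   \<and> \<not> (\<forall>x y u w. E x y \<longrightarrow> E u w \<longrightarrow> (\<exists>g\<in>G. g x = u \<and> g y = w))"

text \<open>The orientation: the G-orbit of a fixed arc (x0,y0); (x,y) in it means x is the tail, y the head.
  The other orbit is its reverse; the choice does not affect alternating cycles.\<close>
definition orient :: "('a \<Rightarrow> 'a \<Rightarrow> bool) \<Rightarrow> ('a \<Rightarrow> 'a) set \<Rightarrow> 'a \<Rightarrow> 'a \<Rightarrow> bool" where
  "orient E G x y \<longleftrightarrow> (let a = (SOME a. E (fst a) (snd a)) in
      \<exists>g\<in>G. g (fst a) = x \<and> g (snd a) = y)"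

definition is_cycle :: "'a set \<Rightarrow> ('a \<Rightarrow> 'a \<Rightarrow> bool) \<Rightarrow> 'a list \<Rightarrow> bool" where
  "is_cycle V E cs \<longleftrightarrow> length cs \<ge> 3 \<and> distinct cs \<and> set cs \<subseteq> V
     \<and> (\<forall>i < length cs. E (cs ! i) (cs ! ((i + 1) mod length cs)))"

definition alt_cycle :: "'a set \<Rightarrow> ('a \<Rightarrow> 'a \<Rightarrow> bool) \<Rightarrow> ('a \<Rightarrow> 'a) set \<Rightarrow> 'a list \<Rightarrow> bool" where
  "alt_cycle V E G cs \<longleftrightarrow> is_cycle V E cs \<and>
     (\<forall>i < length cs.
        let n = length cs; v = cs ! i; p = cs ! ((i + n - 1) mod n); q = cs ! ((i + 1) mod n) in
        (orient E G v p \<and> orient E G v q) \<or> (orient E G p v \<and> orient E G q v))"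

definition cycle_edges :: "'a list \<Rightarrow> 'a set set" where
  "cycle_edges cs = {{cs ! i, cs ! ((i + 1) mod length cs)} | i. i < length cs}"

text \<open>att_G(Gamma): the number of common vertices of two distinct G-alternating cycles sharing a vertex
  (independent of the choice, by the standing facts).\<close>
definition att :: "'a set \<Rightarrow> ('a \<Rightarrow> 'a \<Rightarrow> bool) \<Rightarrow> ('a \<Rightarrow> 'a) set \<Rightarrow> nat" where
  "att V E G = (let P = (SOME P. alt_cycle V E G (fst P) \<and> alt_cycle V E G (snd P)
        \<and> cycle_edges (fst P) \<noteq> cycle_edges (snd P) \<and> set (fst P) \<inter> set (snd P) \<noteq> {})
     in card (set (fst P) \<inter> set (snd P)))"

definition antipode :: "'a list \<Rightarrow> nat \<Rightarrow> 'a" where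
  "antipode cs i = cs ! ((i + length cs div 2) mod length cs)"

end

theory Submission
  imports Defs "HOL-Library.Disjoint_Sets" "HOL-Library.Z2"
begin

text \<open>
  Each vertex has in- and out-degree 2, so along a \<open>G\<close>-alternating cycle an arc-preserving
  injection is determined by its values at two consecutive vertices. Consequently, for an
  alternating cycle \<open>C\<close> through \<open>v\<close> some \<open>\<sigma> \<in> G\<close> fixes \<open>v\<close> and reflects \<open>C\<close> about \<open>v\<close>, and \<open>\<sigma>\<close>
  either fixes or reflects the other alternating cycle \<open>C'\<close> through \<open>v\<close>. Thus \<open>\<sigma>\<close> is an
  involution of \<open>C \<inter> C'\<close>, a set of size \<open>att\<^sub>G(\<Gamma>)\<close> because all such pairs of cycles are
  \<open>G\<close>-conjugate, and its fixed points there are \<open>v\<close> and possibly the antipode of \<open>v\<close> on \<open>C\<close>.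
  An involution of a set of even size has an even number of fixed points, so the antipode of \<open>v\<close>
  on \<open>C\<close> lies on \<open>C'\<close>, and the same argument for the reflection of \<open>C'\<close> forces the two antipodes
  to coincide. The antipodal map \<open>\<tau>\<close> commutes with \<open>G\<close> because \<open>G\<close> permutes the alternating
  cycles, and it preserves adjacency because every arc is a \<open>G\<close>-image of an arc of one fixed
  alternating cycle, where antipodes of consecutive vertices are consecutive.
\<close>

lemma even_card_iff_even_card_fixpoints:
  assumes "finite B" and "\<And>x. x \<in> B \<Longrightarrow> f x \<in> B" and "\<And>x. x \<in> B \<Longrightarrow> f (f x) = x"
  shows "even (card B) \<longleftrightarrow> even (card {x\<in>B. f x = x})"
proof -
  let ?M = "{x\<in>B. f x \<noteq> x}"
  \<comment> \<open>the non-fixed points pair up into orbits \<open>{x, f x}\<close>, so they sum to zero modulo 2\<close>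
  have "(\<Sum>x\<in>?M. 1 :: bit) = 0"
    by (rule sum_involution_eq_0[where h = f]) (use assms(2,3) in force)+
  moreover have "(of_nat n :: bit) = of_bool (odd n)" for n
    by (induction n) auto
  ultimately have "even (card ?M)"
    by simp
  moreover have "card B = card ?M + card {x\<in>B. f x = x}"
    using assms(1) by (subst card_Un_disjoint[symmetric]) (auto intro: arg_cong[where f = card])
  ultimately show ?thesis
    by simp
qed

lemma graph_aut_bij:
  assumes "graph_aut V E f"
  shows "bij f"
proof -
  have "bij_betw f V V" and off: "\<And>x. x \<notin> V \<Longrightarrow> f x = x"
    using assms unfolding graph_aut_def by auto
  moreover have "bij_betw f (- V) (- V)"
    using off by (auto simp: bij_betw_def inj_on_def image_iff)
  ultimately have "bij_betw f (V \<union> - V) (V \<union> - V)"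
    by (intro bij_betw_combine) auto
  then show ?thesis
    by simp
qed

subsection \<open>Lists as periodic functions on the integers\<close>

definition cnth :: "'a list \<Rightarrow> int \<Rightarrow> 'a" where
  "cnth C k = C ! nat (k mod int (length C))"

lemma cnth_cong: "k mod int (length C) = l mod int (length C) \<Longrightarrow> cnth C k = cnth C l"
  unfolding cnth_def by simp

lemma cnth_of_nat: "cnth C (int j) = C ! (j mod length C)"
  unfolding cnth_def by (simp add: of_nat_mod[symmetric])

lemma cnth_nth: "i < length C \<Longrightarrow> cnth C (int i) = C ! i"
  by (simp add: cnth_of_nat)

lemma cnth_index_less: "C \<noteq> [] \<Longrightarrow> nat (k mod int (length C)) < length C"
  by (simp add: nat_less_iff)

lemma range_cnth:
  assumes "C \<noteq> []"
  shows "range (cnth C) = set C"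
proof
  show "range (cnth C) \<subseteq> set C"
    unfolding cnth_def using cnth_index_less[OF assms] by auto
  show "set C \<subseteq> range (cnth C)"
    by (auto simp: in_set_conv_nth) (metis cnth_nth rangeI)
qed

lemma cnth_eq_iff:
  assumes "distinct C" and "C \<noteq> []"
  shows "cnth C k = cnth C l \<longleftrightarrow> k mod int (length C) = l mod int (length C)"
proof -
  have "cnth C k = cnth C l \<longleftrightarrow> nat (k mod int (length C)) = nat (l mod int (length C))"
    unfolding cnth_def using nth_eq_iff_index_eq[OF assms(1)] cnth_index_less[OF assms(2)] by blast
  also have "\<dots> \<longleftrightarrow> k mod int (length C) = l mod int (length C)"
    using assms(2) by (simp add: eq_nat_nat_iff)
  finally show ?thesis .
qed

lemma antipode_cnth: "antipode C i = cnth C (int i + int (length C) div 2)"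
  unfolding antipode_def using cnth_of_nat[of C "i + length C div 2"] by (simp add: zdiv_int)

definition fun_edges :: "(int \<Rightarrow> 'a) \<Rightarrow> 'a set set" where
  "fun_edges c = {{c k, c (k + 1)} | k. True}"

lemma cycle_edges_cnth:
  assumes "C \<noteq> []"
  shows "cycle_edges C = fun_edges (cnth C)"
proof
  show "cycle_edges C \<subseteq> fun_edges (cnth C)"
  proof
    fix e assume "e \<in> cycle_edges C"
    then obtain i where i: "i < length C" "e = {C ! i, C ! ((i + 1) mod length C)}"
      unfolding cycle_edges_def by blast
    then have "e = {cnth C (int i), cnth C (int i + 1)}"
      using cnth_nth[OF i(1)] cnth_of_nat[of C "i + 1"] by (simp add: add.commute)
    then show "e \<in> fun_edges (cnth C)"
      unfolding fun_edges_def by blast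
  qed
  show "fun_edges (cnth C) \<subseteq> cycle_edges C"
  proof
    fix e assume "e \<in> fun_edges (cnth C)"
    then obtain k where k: "e = {cnth C k, cnth C (k + 1)}"
      unfolding fun_edges_def by blast
    define i where "i = nat (k mod int (length C))"
    have i: "i < length C" "int i = k mod int (length C)"
      using cnth_index_less[OF assms] assms unfolding i_def by auto
    have "cnth C (k + 1) = cnth C (int (i + 1))"
      by (rule cnth_cong) (simp add: i(2) mod_simps add.commute)
    then have "e = {C ! i, C ! ((i + 1) mod length C)}"
      using k cnth_of_nat[of C "i + 1"] unfolding cnth_def i_def by simp
    then show "e \<in> cycle_edges C"
      unfolding cycle_edges_def using i(1) by blast
  qed
qed

lemma fun_edges_shift: "fun_edges (\<lambda>k. c (a + k)) = fun_edges c"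
  unfolding fun_edges_def
proof (intro set_eqI iffI)
  fix e assume "e \<in> {{c (a + k), c (a + (k + 1))} |k. True}"
  then obtain k where "e = {c (a + k), c (a + (k + 1))}" by blast
  then show "e \<in> {{c k, c (k + 1)} |k. True}"
    by (intro CollectI exI[of _ "a + k"]) (simp add: add.assoc)
next
  fix e assume "e \<in> {{c k, c (k + 1)} |k. True}"
  then obtain k where "e = {c k, c (k + 1)}" by blast
  moreover have "a + (k - a) = k" "a + (k - a + 1) = k + 1" by simp_all
  ultimately show "e \<in> {{c (a + k), c (a + (k + 1))} |k. True}"
    by (intro CollectI exI[of _ "k - a"]) metis
qed

lemma fun_edges_reflect: "fun_edges (\<lambda>k. c (- k)) = fun_edges c"
  unfolding fun_edges_def
proof (intro set_eqI iffI)
  fix e assume "e \<in> {{c (- k), c (- (k + 1))} |k. True}"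
  then obtain k where "e = {c (- k), c (- (k + 1))}" by blast
  then show "e \<in> {{c k, c (k + 1)} |k. True}"
    by (intro CollectI exI[of _ "- k - 1"]) (simp add: insert_commute)
next
  fix e assume "e \<in> {{c k, c (k + 1)} |k. True}"
  then obtain k where "e = {c k, c (k + 1)}" by blast
  moreover have "- (- k - 1) = k + 1" "- (- k - 1 + 1) = k" by simp_all
  ultimately show "e \<in> {{c (- k), c (- (k + 1))} |k. True}"
    by (intro CollectI exI[of _ "- k - 1"]) (simp only:, simp add: insert_commute)
qed

lemma range_shift: "range (\<lambda>k. c (a + k)) = range (c :: int \<Rightarrow> 'b)"
  by (auto, metis add_diff_cancel_left' diff_add_cancel rangeI)

lemma range_reflect: "range (\<lambda>k. c (- k)) = range (c :: int \<Rightarrow> 'b)"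
  by (auto, metis minus_minus rangeI)

definition walk_from :: "'a list \<Rightarrow> nat \<Rightarrow> int \<Rightarrow> 'a" where
  "walk_from C i k = cnth C (int i + k)"

lemma walk_from_0: "i < length C \<Longrightarrow> walk_from C i 0 = C ! i"
  unfolding walk_from_def by (simp add: cnth_nth)

lemma range_walk_from: "C \<noteq> [] \<Longrightarrow> range (walk_from C i) = set C"
  unfolding walk_from_def using range_shift range_cnth by metis

lemma fun_edges_walk_from: "C \<noteq> [] \<Longrightarrow> fun_edges (walk_from C i) = cycle_edges C"
  unfolding walk_from_def using fun_edges_shift cycle_edges_cnth by metis

lemma antipode_walk_from: "antipode C i = walk_from C i (int (length C) div 2)"
  unfolding walk_from_def by (rule antipode_cnth)

lemma antipode_index_less:
  assumes "i < length C"
  shows "(i + length C div 2) mod length C < length C"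
  using assms by (intro mod_less_divisor) linarith

subsection \<open>Tetravalent half-arc-transitive graphs\<close>

locale tetravalent_half_arc_transitive =
  fixes V :: "'a set" and E :: "'a \<Rightarrow> 'a \<Rightarrow> bool" and G :: "('a \<Rightarrow> 'a) set"
  assumes simple: "simple_graph V E" and tetravalent: "tetravalent V E"
    and subgroup: "aut_subgroup V E G" and half_arc_trans: "half_arc_transitive V E G"
begin

abbreviation arc :: "'a \<Rightarrow> 'a \<Rightarrow> bool" where
  "arc \<equiv> orient E G"

lemma finite_V: "finite V"
  using simple by (simp add: simple_graph_def)

lemma E_in_V: "E x y \<Longrightarrow> x \<in> V \<and> y \<in> V"
  using simple by (simp add: simple_graph_def)

lemma E_sym: "E x y \<Longrightarrow> E y x"
  using simple by (simp add: simple_graph_def)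

lemma G_aut: "g \<in> G \<Longrightarrow> graph_aut V E g"
  using subgroup by (simp add: aut_subgroup_def)

lemma G_comp: "f \<in> G \<Longrightarrow> g \<in> G \<Longrightarrow> f \<circ> g \<in> G"
  using subgroup by (simp add: aut_subgroup_def)

lemma G_inv: "g \<in> G \<Longrightarrow> inv g \<in> G"
  using subgroup by (simp add: aut_subgroup_def)

lemma G_bij: "g \<in> G \<Longrightarrow> bij g"
  using G_aut graph_aut_bij by blast

lemma G_inj: "g \<in> G \<Longrightarrow> inj g"
  using G_bij bij_is_inj by blast

lemma G_inv_f: "g \<in> G \<Longrightarrow> inv g (g x) = x"
  using G_inj by (simp add: inv_f_f)

lemma G_f_inv: "g \<in> G \<Longrightarrow> g (inv g x) = x"
  using G_bij by (simp add: bij_is_surj surj_f_inv_f)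

lemma G_in_V: "g \<in> G \<Longrightarrow> x \<in> V \<Longrightarrow> g x \<in> V"
  using G_aut[of g] unfolding graph_aut_def bij_betw_def by auto

lemma G_E: "g \<in> G \<Longrightarrow> E x y \<Longrightarrow> E (g x) (g y)"
  using G_aut[of g] E_in_V[of x y] unfolding graph_aut_def by auto

lemma vertex_transitive: "x \<in> V \<Longrightarrow> y \<in> V \<Longrightarrow> \<exists>g\<in>G. g x = y"
  using half_arc_trans by (simp add: half_arc_transitive_def)

lemma edge_transitive: "E x y \<Longrightarrow> E u w \<Longrightarrow> \<exists>g\<in>G. (g x = u \<and> g y = w) \<or> (g x = w \<and> g y = u)"
  using half_arc_trans unfolding half_arc_transitive_def by blast

lemma not_arc_transitive: "\<not> (\<forall>x y u w. E x y \<longrightarrow> E u w \<longrightarrow> (\<exists>g\<in>G. g x = u \<and> g y = w))"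
  using half_arc_trans unfolding half_arc_transitive_def by blast

definition base_arc :: "'a \<times> 'a" where
  "base_arc = (SOME a. E (fst a) (snd a))"

lemma E_base_arc: "E (fst base_arc) (snd base_arc)"
proof -
  have "\<exists>a. E (fst a) (snd a)"
    using not_arc_transitive by auto
  then show ?thesis
    unfolding base_arc_def by (rule someI_ex)
qed

lemma arc_iff: "arc x y \<longleftrightarrow> (\<exists>g\<in>G. g (fst base_arc) = x \<and> g (snd base_arc) = y)"
  unfolding orient_def base_arc_def Let_def by simp

lemma arc_E: "arc x y \<Longrightarrow> E x y"
  using G_E E_base_arc unfolding arc_iff by blast

lemma arc_in_V: "arc x y \<Longrightarrow> x \<in> V \<and> y \<in> V"
  using arc_E E_in_V by blast

lemma arc_image: "g \<in> G \<Longrightarrow> arc x y \<Longrightarrow> arc (g x) (g y)"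
  unfolding arc_iff by (metis G_comp comp_apply)

lemma arc_image_iff: "g \<in> G \<Longrightarrow> arc (g x) (g y) \<longleftrightarrow> arc x y"
  using arc_image[of g x y] arc_image[of "inv g" "g x" "g y"] G_inv G_inv_f by auto

lemma arc_or_reverse: "E x y \<Longrightarrow> arc x y \<or> arc y x"
  using edge_transitive[OF E_base_arc, of x y] unfolding arc_iff by blast

lemma arc_transitive_on_arcs:
  assumes "arc x y" and "arc u w"
  shows "\<exists>g\<in>G. g x = u \<and> g y = w"
proof -
  obtain g1 g2 where g1: "g1 \<in> G" "g1 (fst base_arc) = x" "g1 (snd base_arc) = y"
    and g2: "g2 \<in> G" "g2 (fst base_arc) = u" "g2 (snd base_arc) = w"
    using assms unfolding arc_iff by blast
  show ?thesis
    by (rule bexI[of _ "g2 \<circ> inv g1"]) (use g1 g2 G_inv_f G_comp G_inv in auto)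
qed

text \<open>If an edge were oriented both ways, \<open>G\<close> would be transitive on arcs.\<close>

lemma arc_asym: "arc x y \<Longrightarrow> \<not> arc y x"
proof
  assume xy: "arc x y" and yx: "arc y x"
  have all: "arc u w" if uw: "E u w" for u w
  proof -
    obtain h where "h \<in> G" "(h x = u \<and> h y = w) \<or> (h x = w \<and> h y = u)"
      using edge_transitive[OF arc_E[OF xy] uw] by blast
    then show ?thesis
      using arc_image[OF _ xy] arc_image[OF _ yx] by auto
  qed
  then have "\<forall>x y u w. E x y \<longrightarrow> E u w \<longrightarrow> (\<exists>g\<in>G. g x = u \<and> g y = w)"
    using arc_transitive_on_arcs by blast
  then show False
    using not_arc_transitive by blast
qed

definition out_nbrs :: "'a \<Rightarrow> 'a set" where
  "out_nbrs x = {y. arc x y}"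

definition in_nbrs :: "'a \<Rightarrow> 'a set" where
  "in_nbrs x = {y. arc y x}"

lemma finite_out_nbrs: "finite (out_nbrs x)"
  by (rule finite_subset[OF _ finite_V]) (auto simp: out_nbrs_def dest: arc_in_V)

lemma finite_in_nbrs: "finite (in_nbrs x)"
  by (rule finite_subset[OF _ finite_V]) (auto simp: in_nbrs_def dest: arc_in_V)

lemma card_out_nbrs_plus_card_in_nbrs: "x \<in> V \<Longrightarrow> card (out_nbrs x) + card (in_nbrs x) = 4"
proof -
  assume x: "x \<in> V"
  have "{y. E x y} = out_nbrs x \<union> in_nbrs x"
    using arc_or_reverse arc_E E_sym unfolding out_nbrs_def in_nbrs_def by blast
  moreover have "out_nbrs x \<inter> in_nbrs x = {}"
    using arc_asym unfolding out_nbrs_def in_nbrs_def by blast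
  ultimately have "card {y. E x y} = card (out_nbrs x) + card (in_nbrs x)"
    using card_Un_disjoint[OF finite_out_nbrs finite_in_nbrs] by simp
  then show ?thesis
    using tetravalent x unfolding tetravalent_def by simp
qed

lemma out_nbrs_image: "g \<in> G \<Longrightarrow> out_nbrs (g x) = g ` out_nbrs x"
  unfolding out_nbrs_def using arc_image_iff[of g x] G_f_inv[of g] by (auto simp: image_iff) metis

lemma in_nbrs_image: "g \<in> G \<Longrightarrow> in_nbrs (g x) = g ` in_nbrs x"
  unfolding in_nbrs_def using arc_image_iff[of g _ x] G_f_inv[of g] by (auto simp: image_iff) metis

lemma card_out_nbrs_const: "x \<in> V \<Longrightarrow> y \<in> V \<Longrightarrow> card (out_nbrs y) = card (out_nbrs x)"
  using vertex_transitive out_nbrs_image G_inj by (metis card_image inj_on_subset subset_UNIV)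

lemma card_in_nbrs_const: "x \<in> V \<Longrightarrow> y \<in> V \<Longrightarrow> card (in_nbrs y) = card (in_nbrs x)"
  using vertex_transitive in_nbrs_image G_inj by (metis card_image inj_on_subset subset_UNIV)

text \<open>Double counting of arcs: out- and in-degree are constant, hence equal.\<close>

lemma card_out_nbrs_in_nbrs: "x \<in> V \<Longrightarrow> card (out_nbrs x) = 2 \<and> card (in_nbrs x) = 2"
proof -
  assume x: "x \<in> V"
  define A where "A = {(u, w). arc u w}"
  have "A = (SIGMA u:V. out_nbrs u)"
    unfolding A_def out_nbrs_def using arc_in_V by auto
  then have out: "card A = card V * card (out_nbrs x)"
    using finite_V finite_out_nbrs card_out_nbrs_const[OF x] by simp
  have "A = prod.swap ` (SIGMA w:V. in_nbrs w)"
    unfolding A_def in_nbrs_def using arc_in_V by force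
  then have in_: "card A = card V * card (in_nbrs x)"
    using finite_V finite_in_nbrs card_in_nbrs_const[OF x] by (simp add: card_image)
  have "card V > 0"
    using x finite_V card_gt_0_iff by blast
  then show ?thesis
    using out in_ card_out_nbrs_plus_card_in_nbrs[OF x] by simp
qed

lemma other_out_nbr_unique: "arc x p \<Longrightarrow> arc x q \<Longrightarrow> arc x q' \<Longrightarrow> p \<noteq> q \<Longrightarrow> p \<noteq> q' \<Longrightarrow> q = q'"
proof (rule ccontr)
  assume a: "arc x p" "arc x q" "arc x q'" "p \<noteq> q" "p \<noteq> q'" "q \<noteq> q'"
  then have "card {p, q, q'} \<le> card (out_nbrs x)"
    using finite_out_nbrs by (intro card_mono) (auto simp: out_nbrs_def)
  then show False
    using a card_out_nbrs_in_nbrs arc_in_V by fastforce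
qed

lemma other_in_nbr_unique: "arc p x \<Longrightarrow> arc q x \<Longrightarrow> arc q' x \<Longrightarrow> p \<noteq> q \<Longrightarrow> p \<noteq> q' \<Longrightarrow> q = q'"
proof (rule ccontr)
  assume a: "arc p x" "arc q x" "arc q' x" "p \<noteq> q" "p \<noteq> q'" "q \<noteq> q'"
  then have "card {p, q, q'} \<le> card (in_nbrs x)"
    using finite_in_nbrs by (intro card_mono) (auto simp: in_nbrs_def)
  then show False
    using a card_out_nbrs_in_nbrs arc_in_V by fastforce
qed

subsection \<open>Alternating cycles as periodic functions\<close>

definition tail_at :: "(int \<Rightarrow> 'a) \<Rightarrow> int \<Rightarrow> bool" where
  "tail_at c k \<longleftrightarrow> arc (c k) (c (k - 1)) \<and> arc (c k) (c (k + 1))"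

definition head_at :: "(int \<Rightarrow> 'a) \<Rightarrow> int \<Rightarrow> bool" where
  "head_at c k \<longleftrightarrow> arc (c (k - 1)) (c k) \<and> arc (c (k + 1)) (c k)"

text \<open>
  A \<open>G\<close>-alternating cycle of length \<open>n\<close> is read as an \<open>n\<close>-periodic map \<open>\<int> \<rightarrow> V\<close>, injective modulo \<open>n\<close>,
  whose vertices alternate between common tails and common heads of their two cycle edges.
\<close>

definition alt_fun :: "(int \<Rightarrow> 'a) \<Rightarrow> int \<Rightarrow> bool" where
  "alt_fun c n \<longleftrightarrow> n \<ge> 3 \<and> (\<forall>k. tail_at c k \<or> head_at c k) \<and> (\<forall>k l. c k = c l \<longleftrightarrow> k mod n = l mod n)"

lemma alt_fun_arc: "alt_fun c n \<Longrightarrow> arc (c k) (c (k + 1)) \<or> arc (c (k + 1)) (c k)"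
  unfolding alt_fun_def tail_at_def head_at_def by blast

lemma alt_fun_E: "alt_fun c n \<Longrightarrow> E (c k) (c (k + 1))"
  using alt_fun_arc arc_E E_sym by blast

lemma alt_fun_in_V: "alt_fun c n \<Longrightarrow> c k \<in> V"
  using alt_fun_arc arc_in_V by blast

lemma alt_fun_eq_iff: "alt_fun c n \<Longrightarrow> c k = c l \<longleftrightarrow> k mod n = l mod n"
  unfolding alt_fun_def by blast

lemma alt_fun_period_ge_3: "alt_fun c n \<Longrightarrow> n \<ge> 3"
  unfolding alt_fun_def by blast

lemma alt_fun_periodic: "alt_fun c n \<Longrightarrow> c (k + t * n) = c k"
  using alt_fun_eq_iff by simp

lemma alt_fun_nbrs_distinct: "alt_fun c n \<Longrightarrow> c (k - 1) \<noteq> c (k + 1)"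
proof
  assume c: "alt_fun c n" and "c (k - 1) = c (k + 1)"
  then have "n dvd (k - 1) - (k + 1)"
    using alt_fun_eq_iff by (simp add: mod_eq_dvd_iff)
  then have "n \<le> 2"
    by (simp add: zdvd_imp_le)
  then show False
    using alt_fun_period_ge_3[OF c] by simp
qed

lemma tail_at_iff_not_head_at: "alt_fun c n \<Longrightarrow> tail_at c k \<longleftrightarrow> \<not> head_at c k"
  unfolding alt_fun_def tail_at_def head_at_def using arc_asym by blast

lemma tail_at_add_one_iff: "alt_fun c n \<Longrightarrow> tail_at c (k + 1) \<longleftrightarrow> \<not> tail_at c k"
  using tail_at_iff_not_head_at[of c n] arc_asym unfolding tail_at_def head_at_def by fastforce

lemma tail_at_of_nat: "alt_fun c n \<Longrightarrow> tail_at c (int j) \<longleftrightarrow> (tail_at c 0 \<longleftrightarrow> even j)"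
proof (induction j)
  case (Suc j)
  then show ?case
    using tail_at_add_one_iff[OF Suc.prems, of "int j"] by (simp add: add.commute)
qed simp

lemma alt_fun_period_even: "alt_fun c n \<Longrightarrow> even n"
proof -
  assume c: "alt_fun c n"
  obtain j where j: "n = int j"
    using alt_fun_period_ge_3[OF c] by (metis nonneg_eq_int order.trans zero_le_numeral)
  have "c (0 + 1 * n) = c 0" "c (-1 + 1 * n) = c (-1)" "c (1 + 1 * n) = c 1"
    using alt_fun_periodic[OF c] by blast+
  then have "tail_at c n = tail_at c 0"
    unfolding tail_at_def by (simp add: add.commute)
  then show ?thesis
    using tail_at_of_nat[OF c, of j] j by auto
qed

lemma alt_fun_shift: "alt_fun c n \<Longrightarrow> alt_fun (\<lambda>k. c (a + k)) n"
proof -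
  assume c: "alt_fun c n"
  have "tail_at (\<lambda>k. c (a + k)) k \<or> head_at (\<lambda>k. c (a + k)) k" for k
  proof -
    have "tail_at c (a + k) \<or> head_at c (a + k)"
      using c unfolding alt_fun_def by blast
    moreover have e: "a + (k + 1) = a + k + 1" "a + (k - 1) = a + k - 1"
      by simp_all
    ultimately show ?thesis
      unfolding tail_at_def head_at_def by (simp only: e)
  qed
  moreover have "(a + k) mod n = (a + l) mod n \<longleftrightarrow> k mod n = l mod n" for k l :: int
    by (simp add: mod_eq_dvd_iff)
  ultimately show ?thesis
    using c unfolding alt_fun_def by auto
qed

lemma alt_fun_reflect: "alt_fun c n \<Longrightarrow> alt_fun (\<lambda>k. c (- k)) n"
proof -
  assume c: "alt_fun c n"
  have "tail_at (\<lambda>k. c (- k)) k \<or> head_at (\<lambda>k. c (- k)) k" for k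
  proof -
    have "tail_at c (- k) \<or> head_at c (- k)"
      using c unfolding alt_fun_def by blast
    moreover have e: "- (k + 1) = - k - 1" "- (k - 1) = - k + 1"
      by simp_all
    ultimately show ?thesis
      unfolding tail_at_def head_at_def by (simp only: e) blast
  qed
  moreover have "(- k) mod n = (- l) mod n \<longleftrightarrow> k mod n = l mod n" for k l :: int
    using mod_eq_dvd_iff[of "- k" n "- l"] mod_eq_dvd_iff[of k n l] dvd_minus_iff[of n "k - l"]
    by simp
  ultimately show ?thesis
    using c unfolding alt_fun_def by auto
qed

lemma tail_at_image_iff: "g \<in> G \<Longrightarrow> tail_at (g \<circ> c) k \<longleftrightarrow> tail_at c k"
  unfolding tail_at_def using arc_image_iff by simp

lemma head_at_image_iff: "g \<in> G \<Longrightarrow> head_at (g \<circ> c) k \<longleftrightarrow> head_at c k"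
  unfolding head_at_def using arc_image_iff by simp

lemma alt_fun_image: "g \<in> G \<Longrightarrow> alt_fun c n \<Longrightarrow> alt_fun (g \<circ> c) n"
  unfolding alt_fun_def using tail_at_image_iff head_at_image_iff G_inj
  by (simp add: inj_eq)

text \<open>The image of \<open>c (k + 1)\<close> is forced to be the out- or in-neighbour of \<open>d k\<close> other than \<open>d (k - 1)\<close>.\<close>

lemma arc_preserving_step:
  assumes c: "alt_fun c n" and d: "alt_fun d m" and inj: "inj \<phi>"
    and arcs: "\<And>x y. arc x y \<Longrightarrow> arc (\<phi> x) (\<phi> y)"
    and prev: "\<phi> (c (k - 1)) = d (k - 1)" and cur: "\<phi> (c k) = d k"
  shows "\<phi> (c (k + 1)) = d (k + 1)"
proof -
  have ne1: "d (k - 1) \<noteq> d (k + 1)"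
    using alt_fun_nbrs_distinct[OF d] .
  have ne2: "d (k - 1) \<noteq> \<phi> (c (k + 1))"
    using alt_fun_nbrs_distinct[OF c] inj prev by (metis injD)
  show ?thesis
  proof (cases "tail_at c k")
    case True
    then have a: "arc (d k) (d (k - 1))" "arc (d k) (\<phi> (c (k + 1)))"
      using arcs prev cur unfolding tail_at_def by metis+
    then have "tail_at d k"
      using tail_at_iff_not_head_at[OF d] arc_asym unfolding head_at_def by blast
    then show ?thesis
      using other_out_nbr_unique[OF a(1) _ a(2) ne1 ne2] unfolding tail_at_def by auto
  next
    case False
    then have "head_at c k"
      using tail_at_iff_not_head_at[OF c] by blast
    then have a: "arc (d (k - 1)) (d k)" "arc (\<phi> (c (k + 1))) (d k)"
      using arcs prev cur unfolding head_at_def by metis+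
    then have "head_at d k"
      using tail_at_iff_not_head_at[OF d] arc_asym unfolding tail_at_def by blast
    then show ?thesis
      using other_in_nbr_unique[OF a(1) _ a(2) ne1 ne2] unfolding head_at_def by auto
  qed
qed

lemma arc_preserving_determined:
  assumes c: "alt_fun c n" and d: "alt_fun d m" and inj: "inj \<phi>"
    and arcs: "\<And>x y. arc x y \<Longrightarrow> arc (\<phi> x) (\<phi> y)"
    and at0: "\<phi> (c 0) = d 0" and at1: "\<phi> (c 1) = d 1"
  shows "(\<forall>k. \<phi> (c k) = d k) \<and> n = m"
proof -
  have nonneg: "\<phi> (c (int j)) = d (int j) \<and> \<phi> (c (int j + 1)) = d (int j + 1)" for j
  proof (induction j)
    case (Suc j)
    then have "\<phi> (c (int j + 1 + 1)) = d (int j + 1 + 1)"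
      using arc_preserving_step[OF c d inj arcs, of "int j + 1"] by simp
    then show ?case
      using Suc by (simp add: add.commute add.left_commute)
  qed (simp add: at0 at1)
  have n0: "n \<ge> 0" "m \<ge> 0"
    using alt_fun_period_ge_3[OF c] alt_fun_period_ge_3[OF d] by simp_all
  have "d n = d 0"
    using nonneg[of "nat n"] n0 at0 alt_fun_periodic[OF c, of 0 1] by simp
  then have "m dvd n"
    using alt_fun_eq_iff[OF d] by (simp add: dvd_eq_mod_eq_0)
  moreover have "\<phi> (c m) = \<phi> (c 0)"
    using nonneg[of "nat m"] n0 at0 alt_fun_periodic[OF d, of 0 1] by simp
  then have "n dvd m"
    using inj alt_fun_eq_iff[OF c] by (simp add: inj_eq dvd_eq_mod_eq_0)
  ultimately have nm: "n = m"
    using n0 by (simp add: zdvd_antisym_nonneg)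
  have "\<phi> (c k) = d k" for k
  proof -
    have "k + (\<bar>k\<bar>) * n \<ge> 0"
      using alt_fun_period_ge_3[OF c] by (smt (verit) mult_le_cancel_left1)
    then show ?thesis
      using nonneg[of "nat (k + \<bar>k\<bar> * n)"] alt_fun_periodic[OF c, of k "\<bar>k\<bar>"]
        alt_fun_periodic[OF d, of k "\<bar>k\<bar>"] nm by simp
  qed
  then show ?thesis
    using nm by simp
qed

lemma alt_fun_same_type:
  assumes c: "alt_fun c n" and d: "alt_fun d m" and v: "c 0 = d 0" and t: "tail_at c 0 \<longleftrightarrow> tail_at d 0"
  shows "((\<forall>k. d k = c k) \<or> (\<forall>k. d k = c (- k))) \<and> n = m"
proof -
  have ne: "c (-1) \<noteq> c 1"
    using alt_fun_nbrs_distinct[OF c, of 0] by simp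
  have "d 1 = c 1 \<or> d 1 = c (-1)"
  proof (cases "tail_at c 0")
    case True
    then have "arc (c 0) (d 1)" "arc (c 0) (c (-1))" "arc (c 0) (c 1)"
      using t v unfolding tail_at_def by simp_all
    then show ?thesis
      using other_out_nbr_unique[of "c 0" "c 1" "c (-1)" "d 1"] ne by metis
  next
    case False
    then have "head_at c 0" "head_at d 0"
      using t tail_at_iff_not_head_at[OF c] tail_at_iff_not_head_at[OF d] by blast+
    then have "arc (d 1) (c 0)" "arc (c (-1)) (c 0)" "arc (c 1) (c 0)"
      using v unfolding head_at_def by simp_all
    then show ?thesis
      using other_in_nbr_unique[of "c 1" "c 0" "c (-1)" "d 1"] ne by metis
  qed
  then show ?thesis
  proof
    assume "d 1 = c 1"
    then show ?thesis
      using arc_preserving_determined[OF c d, of id] v by (simp add: eq_commute)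
  next
    assume "d 1 = c (-1)"
    then show ?thesis
      using arc_preserving_determined[OF alt_fun_reflect[OF c] d, of id] v by simp
  qed
qed

lemma reflection_exists:
  assumes c: "alt_fun c n"
  obtains \<sigma> where "\<sigma> \<in> G" "\<And>k. \<sigma> (c k) = c (- k)"
proof -
  have e: "E (c 0) (c 1)" "E (c 0) (c (-1))"
    using alt_fun_E[OF c, of 0] alt_fun_E[OF c, of "-1"] E_sym by simp_all
  obtain g where g: "g \<in> G" "(g (c 0) = c 0 \<and> g (c 1) = c (-1)) \<or> (g (c 0) = c (-1) \<and> g (c 1) = c 0)"
    using edge_transitive[OF e] by blast
  have "\<not> (g (c 0) = c (-1) \<and> g (c 1) = c 0)"
  proof
    assume swap: "g (c 0) = c (-1) \<and> g (c 1) = c 0"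
    have "tail_at c 0 \<or> head_at c 0"
      using c unfolding alt_fun_def by blast
    then show False
    proof
      assume "tail_at c 0"
      then have "arc (c 0) (c 1)" "arc (c 0) (c (-1))"
        unfolding tail_at_def by simp_all
      then show False
        using arc_image[OF g(1), of "c 0" "c 1"] swap arc_asym by metis
    next
      assume "head_at c 0"
      then have "arc (c 1) (c 0)" "arc (c (-1)) (c 0)"
        unfolding head_at_def by simp_all
      then show False
        using arc_image[OF g(1), of "c 1" "c 0"] swap arc_asym by metis
    qed
  qed
  then have "g (c 0) = c 0" "g (c 1) = c (-1)"
    using g(2) by blast+
  then have "\<forall>k. g (c k) = c (- k)"
    using arc_preserving_determined[OF c alt_fun_reflect[OF c] G_inj[OF g(1)] arc_image[OF g(1)]] by simp
  then show ?thesis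
    using g(1) that by blast
qed

lemma alt_fun_reflect_fixed:
  assumes c: "alt_fun c n" and fixed: "c (- k) = c k"
  shows "c k = c 0 \<or> c k = c (n div 2)"
proof -
  obtain h where h: "n = 2 * h"
    using alt_fun_period_even[OF c] by blast
  have "n dvd 2 * k"
    using alt_fun_eq_iff[OF c] fixed mod_eq_dvd_iff[of "- k" n k] by simp
  then obtain t where t: "k = h * t"
    using h by (auto elim: dvdE)
  show ?thesis
  proof (cases "even t")
    case True
    then obtain u where "t = 2 * u"
      by blast
    then have "k = 0 + u * n"
      using t h by simp
    then show ?thesis
      using alt_fun_periodic[OF c, of 0 u] by simp
  next
    case False
    then obtain u where "t = 2 * u + 1"
      by (blast elim: oddE)
    then have "k = n div 2 + u * n"
      using t h by (simp add: algebra_simps)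
    then show ?thesis
      using alt_fun_periodic[OF c, of "n div 2" u] by simp
  qed
qed

lemma alt_fun_antipode_ne: "alt_fun c n \<Longrightarrow> c (n div 2) \<noteq> c 0"
  using alt_fun_eq_iff[of c n "n div 2" 0] alt_fun_period_ge_3[of c n] by simp

lemma alt_fun_antipode_reflect:
  assumes c: "alt_fun c n"
  shows "c (- (n div 2)) = c (n div 2)"
proof -
  have "- (n div 2) + 1 * n = n div 2"
    using alt_fun_period_even[OF c] by auto
  then show ?thesis
    using alt_fun_periodic[OF c, of "- (n div 2)" 1] by metis
qed

lemma stabiliser_fixes_or_reflects:
  assumes g: "g \<in> G" and d: "alt_fun d m" and fixed: "g (d 0) = d 0"
  shows "(\<forall>k. g (d k) = d k) \<or> (\<forall>k. g (d k) = d (- k))"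
  using alt_fun_same_type[OF d alt_fun_image[OF g d]] fixed tail_at_image_iff[OF g] by simp

lemma reflection_maps_common_vertices:
  assumes c: "alt_fun c n" and d: "alt_fun d m" and v: "c 0 = d 0"
    and \<sigma>: "\<sigma> \<in> G" "\<And>k. \<sigma> (c k) = c (- k)" and x: "x \<in> range c \<inter> range d"
  shows "\<sigma> x \<in> range c \<inter> range d"
proof -
  have "\<sigma> (d 0) = d 0"
    using \<sigma>(2)[of 0] v by simp
  then have \<sigma>_d: "(\<forall>k. \<sigma> (d k) = d k) \<or> (\<forall>k. \<sigma> (d k) = d (- k))"
    using stabiliser_fixes_or_reflects[OF \<sigma>(1) d] by blast
  obtain k l where "x = c k" "x = d l"
    using x by blast
  then show ?thesis
    using \<sigma>(2)[of k] \<sigma>_d by (metis IntI rangeI)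
qed

lemma antipode_on_other_cycle:
  assumes c: "alt_fun c n" and d: "alt_fun d m" and v: "c 0 = d 0"
    and ev: "even (card (range c \<inter> range d))"
  shows "c (n div 2) \<in> range d"
proof (rule ccontr)
  assume notin: "c (n div 2) \<notin> range d"
  obtain \<sigma> where \<sigma>: "\<sigma> \<in> G" "\<And>k. \<sigma> (c k) = c (- k)"
    using reflection_exists[OF c] by blast
  define B where "B = range c \<inter> range d"
  have "finite B"
    unfolding B_def using alt_fun_in_V[OF c] finite_V by (meson finite_subset image_subset_iff inf.coboundedI1)
  moreover have "\<sigma> x \<in> B" if "x \<in> B" for x
    using reflection_maps_common_vertices[OF c d v \<sigma>] that unfolding B_def .
  moreover have "\<sigma> (\<sigma> x) = x" if "x \<in> range c" for x
    using that \<sigma>(2) by auto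
  moreover have "{x\<in>B. \<sigma> x = x} = {c 0}"
  proof
    show "{c 0} \<subseteq> {x\<in>B. \<sigma> x = x}"
      using \<sigma>(2)[of 0] v unfolding B_def by (simp, metis rangeI)
    show "{x\<in>B. \<sigma> x = x} \<subseteq> {c 0}"
    proof
      fix x assume x: "x \<in> {x\<in>B. \<sigma> x = x}"
      then obtain k where k: "x = c k"
        unfolding B_def by blast
      then have "c k = c 0 \<or> c k = c (n div 2)"
        using x \<sigma>(2)[of k] by (intro alt_fun_reflect_fixed[OF c]) simp
      then show "x \<in> {c 0}"
        using x k notin unfolding B_def by auto
    qed
  qed
  ultimately have "odd (card B)"
    using even_card_iff_even_card_fixpoints[of B \<sigma>] unfolding B_def by simp
  then show False
    using ev unfolding B_def by simp
qed

lemma antipodes_agree: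
  assumes c: "alt_fun c n" and d: "alt_fun d m" and v: "c 0 = d 0"
    and ev: "even (card (range c \<inter> range d))"
  shows "c (n div 2) = d (m div 2)"
proof -
  obtain \<sigma> where \<sigma>: "\<sigma> \<in> G" "\<And>k. \<sigma> (c k) = c (- k)"
    using reflection_exists[OF c] by blast
  have "\<sigma> (d 0) = d 0"
    using \<sigma>(2)[of 0] v by simp
  then consider "\<forall>k. \<sigma> (d k) = d (- k)" | "\<forall>k. \<sigma> (d k) = d k"
    using stabiliser_fixes_or_reflects[OF \<sigma>(1) d] by blast
  then show ?thesis
  proof cases
    case 1
    obtain l where l: "c (n div 2) = d l"
      using antipode_on_other_cycle[OF c d v ev] by blast
    have "d (- l) = \<sigma> (c (n div 2))"
      using 1 l by simp
    also have "\<dots> = d l"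
      using \<sigma>(2)[of "n div 2"] alt_fun_antipode_reflect[OF c] l by metis
    finally have "d l = d 0 \<or> d l = d (m div 2)"
      by (rule alt_fun_reflect_fixed[OF d])
    then show ?thesis
      using l v alt_fun_antipode_ne[OF c] by auto
  next
    case 2
    have "even (card (range d \<inter> range c))"
      using ev by (simp add: Int_commute)
    then obtain k where k: "d (m div 2) = c k"
      using antipode_on_other_cycle[OF d c v[symmetric]] by blast
    have "c (- k) = \<sigma> (d (m div 2))"
      using \<sigma>(2) k by simp
    also have "\<dots> = c k"
      using 2 k by metis
    finally have "c k = c 0 \<or> c k = c (n div 2)"
      by (rule alt_fun_reflect_fixed[OF c])
    then show ?thesis
      using k v alt_fun_antipode_ne[OF d] by auto
  qed
qed

lemma alt_cycle_nonempty: "alt_cycle V E G C \<Longrightarrow> C \<noteq> []"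
  unfolding alt_cycle_def is_cycle_def by auto

lemma alt_cycle_type_at:
  assumes C: "alt_cycle V E G C" and i: "i < length C"
  shows "tail_at (cnth C) (int i) \<or> head_at (cnth C) (int i)"
proof -
  define n where "n = length C"
  have n3: "n \<ge> 3"
    using C unfolding alt_cycle_def is_cycle_def n_def by auto
  have cur: "cnth C (int i) = C ! i" and succ: "cnth C (int i + 1) = C ! ((i + 1) mod n)"
    using cnth_nth[OF i] cnth_of_nat[of C "i + 1"] n_def by (simp_all add: add.commute)
  have "int (i + n - 1) = (int i - 1) + int n"
    using n3 by (simp add: of_nat_diff)
  then have pred: "cnth C (int i - 1) = C ! ((i + n - 1) mod n)"
    using cnth_cong[of "int i - 1" C "int (i + n - 1)"] cnth_of_nat[of C "i + n - 1"] n_def by simp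
  have "let n = length C; v = C ! i; p = C ! ((i + n - 1) mod n); q = C ! ((i + 1) mod n) in
      (orient E G v p \<and> orient E G v q) \<or> (orient E G p v \<and> orient E G q v)"
    using C i unfolding alt_cycle_def by blast
  then show ?thesis
    unfolding tail_at_def head_at_def Let_def cur succ pred n_def .
qed

lemma alt_cycle_alt_fun:
  assumes C: "alt_cycle V E G C"
  shows "alt_fun (cnth C) (int (length C))"
proof -
  define n where "n = length C"
  have n3: "n \<ge> 3" and dist: "distinct C"
    using C unfolding alt_cycle_def is_cycle_def n_def by auto
  have "tail_at (cnth C) k \<or> head_at (cnth C) k" for k
  proof -
    define i where "i = nat (k mod int n)"
    have "int n > 0"
      using n3 by simp
    then have i: "i < n" "int i = k mod int n"
      using cnth_index_less[OF alt_cycle_nonempty[OF C]] unfolding i_def n_def by simp_all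
    have "cnth C k = cnth C (int i)" "cnth C (k + 1) = cnth C (int i + 1)"
      "cnth C (k - 1) = cnth C (int i - 1)"
      by (rule cnth_cong, simp add: i(2) n_def[symmetric] mod_simps)+
    then show ?thesis
      using alt_cycle_type_at[OF C i(1)[unfolded n_def]] unfolding tail_at_def head_at_def by simp
  qed
  then show ?thesis
    unfolding alt_fun_def using n3 cnth_eq_iff[OF dist alt_cycle_nonempty[OF C]] n_def by simp
qed

lemma alt_cycle_walk_from: "alt_cycle V E G C \<Longrightarrow> alt_fun (walk_from C i) (int (length C))"
  unfolding walk_from_def[abs_def] by (rule alt_fun_shift[OF alt_cycle_alt_fun])

lemma alt_fun_same_type_range_edges:
  assumes c: "alt_fun c n" and d: "alt_fun d m" and v: "c 0 = d 0" and t: "tail_at c 0 \<longleftrightarrow> tail_at d 0"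
  shows "range d = range c \<and> fun_edges d = fun_edges c"
proof -
  have "d = c \<or> d = (\<lambda>k. c (- k))"
    using alt_fun_same_type[OF c d v t] by auto
  then show ?thesis
  proof
    assume "d = (\<lambda>k. c (- k))"
    then show ?thesis
      by (simp add: range_reflect fun_edges_reflect)
  qed simp
qed

lemma alt_fun_other_type_edges_ne:
  assumes c: "alt_fun c n" and d: "alt_fun d m" and v: "c 0 = d 0" and t: "tail_at c 0" "\<not> tail_at d 0"
  shows "fun_edges c \<noteq> fun_edges d"
proof
  assume same: "fun_edges c = fun_edges d"
  have "{c 0, c 1} \<in> fun_edges c"
    unfolding fun_edges_def by (intro CollectI exI[of _ 0]) simp
  then have "{c 0, c 1} \<in> fun_edges d"
    by (simp only: same)
  then obtain k where k: "{c 0, c 1} = {d k, d (k + 1)}"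
    unfolding fun_edges_def by auto
  have arc_c: "arc (c 0) (c 1)"
    using t(1) unfolding tail_at_def by simp
  have "head_at d 0"
    using t(2) tail_at_iff_not_head_at[OF d] by blast
  then have arcs_d: "arc (d 1) (d 0)" "arc (d (-1)) (d 0)"
    unfolding head_at_def by simp_all
  have shift: "d (a + j) = d j" if "d a = d 0" for a j
    using that alt_fun_eq_iff[OF d, of a 0] alt_fun_eq_iff[OF d, of "a + j" j] mod_add_cong[of a m 0 j j]
    by simp
  from k have "c 0 = d k \<and> c 1 = d (k + 1) \<or> c 0 = d (k + 1) \<and> c 1 = d k"
    by (simp add: doubleton_eq_iff)
  then show False
  proof
    assume a: "c 0 = d k \<and> c 1 = d (k + 1)"
    then have "c 1 = d 1"
      using shift[of k 1] v by metis
    then show False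
      using arcs_d(1) arc_c v arc_asym by metis
  next
    assume "c 0 = d (k + 1) \<and> c 1 = d k"
    then have "c 1 = d (-1)"
      using shift[of "k + 1" "-1"] v by simp
    then show False
      using arcs_d(2) arc_c v arc_asym by metis
  qed
qed

lemma card_range_inter_image:
  assumes "g \<in> G"
  shows "card (range (g \<circ> c) \<inter> range (g \<circ> d)) = card (range c \<inter> range d)"
proof -
  have "range (g \<circ> c) \<inter> range (g \<circ> d) = g ` (range c \<inter> range d)"
    using image_Int[OF G_inj[OF assms]] by (simp add: image_comp)
  then show ?thesis
    using G_inj[OF assms] by (simp add: card_image inj_on_subset)
qed

text \<open>By vertex-transitivity both pairs are \<open>G\<close>-conjugate.\<close>

lemma card_common_vertices_invariant:
  assumes c: "alt_fun c n" and d: "alt_fun d m" and v: "c 0 = d 0" and t: "\<not> (tail_at c 0 \<longleftrightarrow> tail_at d 0)"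
    and c': "alt_fun c' n'" and d': "alt_fun d' m'" and v': "c' 0 = d' 0" and t': "\<not> (tail_at c' 0 \<longleftrightarrow> tail_at d' 0)"
  shows "card (range c \<inter> range d) = card (range c' \<inter> range d')"
proof -
  obtain g where g: "g \<in> G" "g (c' 0) = c 0"
    using vertex_transitive alt_fun_in_V[OF c] alt_fun_in_V[OF c'] by blast
  have gc': "alt_fun (g \<circ> c') n'" and gd': "alt_fun (g \<circ> d') m'"
    using alt_fun_image[OF g(1)] c' d' by blast+
  have at0: "(g \<circ> c') 0 = c 0" "(g \<circ> d') 0 = c 0"
    using g v' by simp_all
  have types: "tail_at (g \<circ> c') 0 \<longleftrightarrow> tail_at c' 0" "tail_at (g \<circ> d') 0 \<longleftrightarrow> tail_at d' 0"
    using tail_at_image_iff[OF g(1)] by blast+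
  have "card (range (g \<circ> c') \<inter> range (g \<circ> d')) = card (range c \<inter> range d)"
  proof (cases "tail_at c 0 \<longleftrightarrow> tail_at c' 0")
    case True
    have "range (g \<circ> c') = range c"
      using alt_fun_same_type_range_edges[OF c gc'] at0 types(1) True by simp
    moreover have "range (g \<circ> d') = range d"
      using alt_fun_same_type_range_edges[OF d gd'] at0 types(2) True t t' v by simp
    ultimately show ?thesis
      by simp
  next
    case False
    have "range (g \<circ> d') = range c"
      using alt_fun_same_type_range_edges[OF c gd'] at0 types(2) False t' by simp
    moreover have "range (g \<circ> c') = range d"
      using alt_fun_same_type_range_edges[OF d gc'] at0 types(1) False t v by simp
    ultimately show ?thesis
      by (simp add: Int_commute)
  qed
  then show ?thesis
    using card_range_inter_image[OF g(1), of c' d'] by metis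
qed

lemma att_witness:
  assumes "alt_cycle V E G C" and "alt_cycle V E G C'"
    and "cycle_edges C \<noteq> cycle_edges C'" and "set C \<inter> set C' \<noteq> {}"
  obtains D D' where "alt_cycle V E G D" "alt_cycle V E G D'" "cycle_edges D \<noteq> cycle_edges D'"
    "set D \<inter> set D' \<noteq> {}" "att V E G = card (set D \<inter> set D')"
proof -
  let ?pair = "\<lambda>P. alt_cycle V E G (fst P) \<and> alt_cycle V E G (snd P)
      \<and> cycle_edges (fst P) \<noteq> cycle_edges (snd P) \<and> set (fst P) \<inter> set (snd P) \<noteq> {}"
  have "?pair (C, C')"
    using assms by simp
  then have "?pair (SOME P. ?pair P)"
    by (rule someI)
  then show ?thesis
    using that unfolding att_def Let_def by blast
qed

lemma att_eq_card_common_vertices: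
  assumes C: "alt_cycle V E G C" and C': "alt_cycle V E G C'"
    and i: "i < length C" and j: "j < length C'" and v: "C ! i = C' ! j"
    and t: "\<not> (tail_at (walk_from C i) 0 \<longleftrightarrow> tail_at (walk_from C' j) 0)"
  shows "att V E G = card (set C \<inter> set C')"
proof -
  let ?c = "walk_from C i" and ?d = "walk_from C' j"
  have c: "alt_fun ?c (int (length C))" and d: "alt_fun ?d (int (length C'))"
    using alt_cycle_walk_from C C' by blast+
  have v0: "?c 0 = ?d 0"
    using walk_from_0 i j v by metis
  have "fun_edges ?c \<noteq> fun_edges ?d"
    using alt_fun_other_type_edges_ne[OF c d v0] alt_fun_other_type_edges_ne[OF d c v0[symmetric]] t
    by metis
  then have "cycle_edges C \<noteq> cycle_edges C'"
    using fun_edges_walk_from[OF alt_cycle_nonempty[OF C]] fun_edges_walk_from[OF alt_cycle_nonempty[OF C']]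
    by metis
  moreover have "set C \<inter> set C' \<noteq> {}"
    using i j v by (metis IntI nth_mem empty_iff)
  ultimately obtain D D' where D: "alt_cycle V E G D" and D': "alt_cycle V E G D'"
    and ne: "cycle_edges D \<noteq> cycle_edges D'" and "set D \<inter> set D' \<noteq> {}"
    and att: "att V E G = card (set D \<inter> set D')"
    using att_witness[OF C C'] by blast
  then obtain p q where pq: "p < length D" "q < length D'" "D ! p = D' ! q"
    by (metis disjoint_iff in_set_conv_nth)
  let ?e = "walk_from D p" and ?e' = "walk_from D' q"
  have e: "alt_fun ?e (int (length D))" and e': "alt_fun ?e' (int (length D'))"
    using alt_cycle_walk_from D D' by blast+
  have v1: "?e 0 = ?e' 0"
    using walk_from_0 pq by metis
  have "\<not> (tail_at ?e 0 \<longleftrightarrow> tail_at ?e' 0)"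
    using alt_fun_same_type_range_edges[OF e e' v1] ne
      fun_edges_walk_from[OF alt_cycle_nonempty[OF D]] fun_edges_walk_from[OF alt_cycle_nonempty[OF D']]
    by metis
  then have "card (range ?c \<inter> range ?d) = card (range ?e \<inter> range ?e')"
    using card_common_vertices_invariant[OF c d v0 t e e' v1] by blast
  then show ?thesis
    using att range_walk_from[OF alt_cycle_nonempty[OF C]] range_walk_from[OF alt_cycle_nonempty[OF C']]
      range_walk_from[OF alt_cycle_nonempty[OF D]] range_walk_from[OF alt_cycle_nonempty[OF D']]
    by simp
qed

lemma antipode_well_defined:
  assumes even_att: "even (att V E G)"
    and C: "alt_cycle V E G C" and C': "alt_cycle V E G C'"
    and i: "i < length C" and j: "j < length C'" and v: "C ! i = C' ! j"
  shows "antipode C i = antipode C' j"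
proof -
  let ?c = "walk_from C i" and ?d = "walk_from C' j"
  have c: "alt_fun ?c (int (length C))" and d: "alt_fun ?d (int (length C'))"
    using alt_cycle_walk_from C C' by blast+
  have v0: "?c 0 = ?d 0"
    using walk_from_0 i j v by metis
  show ?thesis
  proof (cases "tail_at ?c 0 \<longleftrightarrow> tail_at ?d 0")
    case True
    then have "(\<forall>k. ?d k = ?c k) \<or> (\<forall>k. ?d k = ?c (- k))" and "length C' = length C"
      using alt_fun_same_type[OF c d v0] by auto
    then show ?thesis
      using alt_fun_antipode_reflect[OF c] unfolding antipode_walk_from by auto
  next
    case False
    then have "even (card (range ?c \<inter> range ?d))"
      using even_att att_eq_card_common_vertices[OF C C' i j v]
        range_walk_from[OF alt_cycle_nonempty[OF C]] range_walk_from[OF alt_cycle_nonempty[OF C']]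
      by simp
    then show ?thesis
      using antipodes_agree[OF c d v0] antipode_walk_from by metis
  qed
qed

lemma alt_cycle_map:
  assumes g: "g \<in> G" and C: "alt_cycle V E G C"
  shows "alt_cycle V E G (map g C)"
proof -
  define n where "n = length C"
  have n3: "n \<ge> 3" and dist: "distinct C" and "set C \<subseteq> V"
    and edges: "\<forall>i<n. E (C ! i) (C ! ((i + 1) mod n))"
    using C unfolding alt_cycle_def is_cycle_def n_def by auto
  have "is_cycle V E (map g C)"
    unfolding is_cycle_def
  proof (intro conjI allI impI)
    show "3 \<le> length (map g C)" "distinct (map g C)" "set (map g C) \<subseteq> V"
      using n3 dist \<open>set C \<subseteq> V\<close> G_inj[OF g] G_in_V[OF g] n_def
      by (auto simp: distinct_map inj_on_subset)
    show "E (map g C ! i) (map g C ! ((i + 1) mod length (map g C)))" if "i < length (map g C)" for i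
    proof -
      have "(i + 1) mod n < n"
        using n3 by simp
      then show ?thesis
        using that edges G_E[OF g] n_def by simp
    qed
  qed
  moreover have "let n = length (map g C); v = map g C ! i; p = map g C ! ((i + n - 1) mod n);
        q = map g C ! ((i + 1) mod n) in (arc v p \<and> arc v q) \<or> (arc p v \<and> arc q v)"
    if i: "i < length (map g C)" for i
  proof -
    have "(i + n - 1) mod n < n" "(i + 1) mod n < n"
      using n3 by simp_all
    moreover have "let n = length C; v = C ! i; p = C ! ((i + n - 1) mod n); q = C ! ((i + 1) mod n) in
        (arc v p \<and> arc v q) \<or> (arc p v \<and> arc q v)"
      using C i unfolding alt_cycle_def by simp
    ultimately show ?thesis
      using i arc_image_iff[OF g] unfolding Let_def n_def by simp
  qed
  ultimately show ?thesis
    unfolding alt_cycle_def by blast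
qed

lemma alt_cycle_length_even: "alt_cycle V E G C \<Longrightarrow> even (length C)"
  using alt_fun_period_even[OF alt_cycle_alt_fun] by simp

lemma alt_cycle_has_arc:
  assumes C: "alt_cycle V E G C"
  obtains a where "a + 1 < length C" "arc (C ! a) (C ! (a + 1))"
proof -
  have n3: "length C \<ge> 3"
    using C unfolding alt_cycle_def is_cycle_def by simp
  have c: "alt_fun (cnth C) (int (length C))"
    using alt_cycle_alt_fun[OF C] .
  consider "arc (cnth C 0) (cnth C 1)" | "arc (cnth C 1) (cnth C 2)"
  proof (cases "arc (cnth C 1) (cnth C 2)")
    case False
    then have "tail_at (cnth C) 0"
      using tail_at_add_one_iff[OF c, of 0] unfolding tail_at_def by simp
    then show ?thesis
      using that unfolding tail_at_def by simp
  qed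
  then show ?thesis
  proof cases
    case 1
    then show ?thesis
      using that[of 0] n3 cnth_nth[of 0 C] cnth_nth[of 1 C] alt_cycle_nonempty[OF C] by simp
  next
    case 2
    then show ?thesis
      using that[of 1] n3 cnth_nth[of 1 C] cnth_nth[of 2 C] by (simp add: numeral_2_eq_2)
  qed
qed

end

subsection \<open>The antipodal map\<close>

locale tetravalent_half_arc_transitive_even_att = tetravalent_half_arc_transitive +
  assumes even_att: "even (att V E G)"
begin

definition on_alt_cycle :: "'a \<Rightarrow> bool" where
  "on_alt_cycle x \<longleftrightarrow> (\<exists>C i. alt_cycle V E G C \<and> i < length C \<and> C ! i = x)"

text \<open>Off the alternating cycles \<open>tau\<close> is the identity; the theorem does not need that none exist.\<close>

definition tau :: "'a \<Rightarrow> 'a" where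
  "tau x = (if on_alt_cycle x
     then (SOME y. \<exists>C i. alt_cycle V E G C \<and> i < length C \<and> C ! i = x \<and> y = antipode C i) else x)"

lemma tau_antipode:
  assumes C: "alt_cycle V E G C" and i: "i < length C"
  shows "tau (C ! i) = antipode C i"
proof -
  let ?P = "\<lambda>y. \<exists>C' j. alt_cycle V E G C' \<and> j < length C' \<and> C' ! j = C ! i \<and> y = antipode C' j"
  have "on_alt_cycle (C ! i)"
    unfolding on_alt_cycle_def using C i by blast
  moreover have "?P (SOME y. ?P y)"
    by (rule someI[of _ "antipode C i"]) (use C i in blast)
  ultimately show ?thesis
    unfolding tau_def using antipode_well_defined[OF even_att C _ i] by auto
qed

lemma on_alt_cycle_in_V: "on_alt_cycle x \<Longrightarrow> x \<in> V"
  unfolding on_alt_cycle_def alt_cycle_def is_cycle_def by (meson nth_mem subsetD)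

lemma tau_off: "\<not> on_alt_cycle x \<Longrightarrow> tau x = x"
  unfolding tau_def by simp

lemma tau_nth:
  assumes C: "alt_cycle V E G C" and i: "i < length C"
  shows "tau (C ! i) = C ! ((i + length C div 2) mod length C)"
  using tau_antipode[OF assms] unfolding antipode_def .

lemma tau_tau: "tau (tau x) = x"
proof (cases "on_alt_cycle x")
  case True
  then obtain C i where C: "alt_cycle V E G C" "i < length C" "C ! i = x"
    unfolding on_alt_cycle_def by blast
  define n where "n = length C"
  define i' where "i' = (i + n div 2) mod n"
  have i': "i' < n" "tau x = C ! i'"
    using tau_nth[OF C(1,2)] antipode_index_less[OF C(2)] C(3) unfolding i'_def n_def by simp_all
  have "(i' + n div 2) mod n = (i + n div 2 + n div 2) mod n"
    unfolding i'_def by (simp add: mod_simps)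
  also have "\<dots> = (i + n) mod n"
    using alt_cycle_length_even[OF C(1)] unfolding n_def by (metis add.assoc dvd_mult_div_cancel mult_2)
  also have "\<dots> = i"
    using C(2) n_def by simp
  finally show ?thesis
    using tau_nth[OF C(1) i'(1)[unfolded n_def]] i'(2) C(3) n_def by simp
qed (simp add: tau_off)

lemma tau_in_V: "x \<in> V \<Longrightarrow> tau x \<in> V"
proof (cases "on_alt_cycle x")
  case True
  then obtain C i where C: "alt_cycle V E G C" "i < length C" "C ! i = x"
    unfolding on_alt_cycle_def by blast
  then have "tau x \<in> set C"
    using tau_nth[OF C(1,2)] antipode_index_less[OF C(2)] by simp
  then show ?thesis
    using C(1) unfolding alt_cycle_def is_cycle_def by blast
qed (simp add: tau_off)

lemma on_alt_cycle_image:
  assumes g: "g \<in> G" and x: "on_alt_cycle x"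
  shows "on_alt_cycle (g x)"
proof -
  obtain C i where "alt_cycle V E G C" "i < length C" "C ! i = x"
    using x unfolding on_alt_cycle_def by blast
  then show ?thesis
    unfolding on_alt_cycle_def using alt_cycle_map[OF g] by (intro exI[of _ "map g C"] exI[of _ i]) simp
qed

lemma tau_commute:
  assumes g: "g \<in> G"
  shows "tau (g x) = g (tau x)"
proof (cases "on_alt_cycle x")
  case True
  then obtain C i where C: "alt_cycle V E G C" "i < length C" "C ! i = x"
    unfolding on_alt_cycle_def by blast
  then show ?thesis
    using tau_nth[OF alt_cycle_map[OF g C(1)], of i] tau_nth[OF C(1,2)] antipode_index_less[OF C(2)]
    by simp
next
  case False
  then have "\<not> on_alt_cycle (g x)"
    using on_alt_cycle_image[OF G_inv[OF g], of "g x"] G_inv_f[OF g, of x] by auto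
  then show ?thesis
    using False by (simp add: tau_off)
qed

text \<open>
  Every arc is a \<open>G\<close>-image of an arc \<open>(C ! a, C ! (a + 1))\<close> of a fixed alternating cycle, whose
  antipodes are again consecutive on \<open>C\<close>.
\<close>

lemma tau_arc:
  assumes xy: "arc x y"
  shows "E (tau x) (tau y)"
proof (cases "\<exists>C. alt_cycle V E G C")
  case False
  then show ?thesis
    using arc_E[OF xy] by (simp add: tau_off on_alt_cycle_def)
next
  case True
  then obtain C where C: "alt_cycle V E G C"
    by blast
  obtain a where a: "a + 1 < length C" "arc (C ! a) (C ! (a + 1))"
    using alt_cycle_has_arc[OF C] .
  obtain g where g: "g \<in> G" "g (C ! a) = x" "g (C ! (a + 1)) = y"
    using arc_transitive_on_arcs[OF a(2) xy] by blast
  have "E (antipode C a) (antipode C (a + 1))"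
  proof -
    let ?k = "int a + int (length C) div 2"
    have "antipode C (a + 1) = cnth C (?k + 1)"
      unfolding antipode_cnth by (simp add: ac_simps)
    then show ?thesis
      using alt_fun_E[OF alt_cycle_alt_fun[OF C], of ?k] unfolding antipode_cnth[of C a] by simp
  qed
  moreover have "tau x = g (antipode C a)"
    using tau_commute[OF g(1), of "C ! a"] tau_antipode[OF C, of a] a(1) g(2) by simp
  moreover have "tau y = g (antipode C (a + 1))"
    using tau_commute[OF g(1), of "C ! (a + 1)"] tau_antipode[OF C, of "a + 1"] a(1) g(3) by simp
  ultimately show ?thesis
    using G_E[OF g(1)] by simp
qed

lemma tau_E:
  assumes "E x y"
  shows "E (tau x) (tau y)"
  using arc_or_reverse[OF assms]
proof
  assume "arc y x"
  then show ?thesis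
    using tau_arc E_sym by blast
qed (rule tau_arc)

lemma tau_graph_aut: "graph_aut V E tau"
  unfolding graph_aut_def
proof (intro conjI ballI allI impI)
  show "bij_betw tau V V"
    by (rule bij_betw_byWitness[where f' = tau]) (auto simp: tau_tau tau_in_V)
  show "tau x = x" if "x \<notin> V" for x
    using that tau_off on_alt_cycle_in_V by blast
  show "E x y \<longleftrightarrow> E (tau x) (tau y)" for x y
    using tau_E[of x y] tau_E[of "tau x" "tau y"] by (auto simp: tau_tau)
qed

end

theorem proposition3p1:
  fixes V :: "'a set" and E :: "'a \<Rightarrow> 'a \<Rightarrow> bool" and G :: "('a \<Rightarrow> 'a) set"
  assumes "simple_graph V E" and "tetravalent V E"
    and "aut_subgroup V E G" and "half_arc_transitive V E G"
    and "even (att V E G)"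
  shows "(\<forall>v\<in>V. \<forall>C C' i j. alt_cycle V E G C \<and> alt_cycle V E G C' \<and> i < length C \<and> j < length C'
            \<and> C ! i = v \<and> C' ! j = v \<longrightarrow> antipode C i = antipode C' j)
    \<and> (\<exists>\<tau>. (\<forall>C i. alt_cycle V E G C \<and> i < length C \<longrightarrow> \<tau> (C ! i) = antipode C i)
           \<and> \<tau> \<circ> \<tau> = id \<and> graph_aut V E \<tau> \<and> (\<forall>g\<in>G. \<tau> \<circ> g = g \<circ> \<tau>))"
proof -
  interpret tetravalent_half_arc_transitive_even_att V E G
    using assms by unfold_locales
  have "\<forall>v\<in>V. \<forall>C C' i j. alt_cycle V E G C \<and> alt_cycle V E G C' \<and> i < length C \<and> j < length C'
      \<and> C ! i = v \<and> C' ! j = v \<longrightarrow> antipode C i = antipode C' j"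
    by (intro ballI allI impI) (rule antipode_well_defined[OF even_att], auto)
  moreover have "\<forall>C i. alt_cycle V E G C \<and> i < length C \<longrightarrow> tau (C ! i) = antipode C i"
    using tau_antipode by blast
  moreover have "tau \<circ> tau = id"
    by (simp add: fun_eq_iff tau_tau)
  moreover have "\<forall>g\<in>G. tau \<circ> g = g \<circ> tau"
    by (simp add: fun_eq_iff tau_commute)
  ultimately show ?thesis
    using tau_graph_aut by blast
qed

end
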